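(* Let $\mathcal{H}$ be a Hilbert space of dimension $d$ with $2 \le d < \infty$, let $X$ be a set with $d^2$ elements, and let $\mathbf{U}=\{U_x : x\in X\}$ and $\mathbf{U}'=\{U'_x : x \in X\}$ be unitary bases for $\mathcal{H}$. Then the following are equivalent: (i) $\mathbf{U}$ is equivalent to $\mathbf{U}'$; (ii) for some $\mathbf{U}$-associated tag $\mathbf{T}=(x_0,U_{x_0},\mathbf{W})$ and some $\mathbf{U}'$-associated tag $\mathbf{T}'=(x_0',U'_{x_0'},\mathbf{W}')$, the unitary system $\mathbf{W}$ is collectively unitarily equivalent to $\mathbf{W}'$; (iii) for each $\mathbf{U}$-associated tag $\mathbf{T}=(x_0,U_{x_0},\mathbf{W})$ there is a $\mathbf{U}'$-associated tag $\mathbf{T}'=(x_0',U'_{x_0'},\mathbf{W}')$ such that $\mathbf{W}$ is collectively unitarily equivalent to $\mathbf{W}'$.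
   Context: $\mathcal{U}(\mathcal{H})$ denotes the unitaries on $\mathcal{H}$. A unitary basis (UB) is a family $\mathbf{U}=\{U_x: x\in X\}$ of unitaries on $\mathcal{H}$ with $\operatorname{tr}(U_x^*U_y)=d\,\delta_{xy}$ for $x,y\in X$. Two unitary bases $\mathbf{U}$, $\mathbf{U}'$ are equivalent if there exist unitaries $V_1,V_2$ on $\mathcal{H}$ and a bijection (relabelling) $x\mapsto x'$ of $X$ such that $U'_{x'}=V_1U_xV_2$ for all $x\in X$. For $x_0\in X$, the $\mathbf{U}$-associated tag at $x_0$ is the triple $(x_0,U_{x_0},\mathbf{W})$ where $\mathbf{W}=\{W_x=U_{x_0}^*U_x : x\in X, x\neq x_0\}$ (a set of unitaries). For subsets $\mathcal{F},\mathcal{G}$ of bounded operators on $\mathcal{H}$, $\mathcal{F}$ is collectively unitarily equivalent (CUE) to $\mathcal{G}$ if there is a unitary $V$ on $\mathcal{H}$ with $\mathcal{G}=\{V^*AV : A\in\mathcal{F}\}$. *)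

theory Defs
  imports "HOL-Analysis.Analysis"
begin

text \<open>Operators on a d-dimensional Hilbert space are modelled as complex
  matrices indexed by a finite type 'n with CARD('n) = d.\<close>

definition adj :: "complex^'n^'n \<Rightarrow> complex^'n^'n" where
  "adj A = (\<chi> i j. cnj (A $ j $ i))"

definition unitary_mat :: "complex^'n^'n \<Rightarrow> bool" where
  "unitary_mat U \<longleftrightarrow> adj U ** U = mat 1 \<and> U ** adj U = mat 1"

definition unitary_basis :: "'x set \<Rightarrow> ('x \<Rightarrow> complex^'n^'n) \<Rightarrow> bool" where
  "unitary_basis X U \<longleftrightarrow>
     (\<forall>x\<in>X. unitary_mat (U x)) \<and>
     (\<forall>x\<in>X. \<forall>y\<in>X. trace (adj (U x) ** U y) = (if x = y then of_nat CARD('n) else 0))"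

definition ub_equivalent :: "'x set \<Rightarrow> ('x \<Rightarrow> complex^'n^'n) \<Rightarrow> ('x \<Rightarrow> complex^'n^'n) \<Rightarrow> bool" where
  "ub_equivalent X U U' \<longleftrightarrow>
     (\<exists>V1 V2 \<sigma>. unitary_mat V1 \<and> unitary_mat V2 \<and> bij_betw \<sigma> X X \<and>
        (\<forall>x\<in>X. U' (\<sigma> x) = V1 ** U x ** V2))"

definition tag_system :: "'x set \<Rightarrow> ('x \<Rightarrow> complex^'n^'n) \<Rightarrow> 'x \<Rightarrow> (complex^'n^'n) set" where
  "tag_system X U x0 = {adj (U x0) ** U x | x. x \<in> X \<and> x \<noteq> x0}"

definition CUE :: "(complex^'n^'n) set \<Rightarrow> (complex^'n^'n) set \<Rightarrow> bool" where
  "CUE F G \<longleftrightarrow> (\<exists>V. unitary_mat V \<and> G = (\<lambda>A. adj V ** A ** V) ` F)"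

end

theory Submission
  imports Defs
begin

text \<open>A tag at x0 determines the whole basis up to the left factor U x0, since
  U ` X = {U x0} \<union> U x0 ** W. Conjugating W by V therefore amounts to replacing U
  by the basis x \<mapsto> V1 ** U x ** V with V1 = U' x0' ** adj V ** adj (U x0), whose image
  is that of U'; as both bases are injective on X, equality of images yields the
  relabelling. Conversely an equivalence U' (\<sigma> x) = V1 ** U x ** V2 turns the tag at x0
  into the conjugate by V2 of the tag at \<sigma> x0, the factor V1 cancelling.\<close>

lemma adj_matrix_mul: "adj (A ** B) = adj B ** adj (A :: complex^'n^'n)"
  by (simp add: adj_def matrix_matrix_mult_def vec_eq_iff mult.commute)

lemma adj_adj [simp]: "adj (adj (A :: complex^'n^'n)) = A"
  by (simp add: adj_def vec_eq_iff)

lemma unitary_mat_adj_mul: "unitary_mat U \<Longrightarrow> adj U ** U = mat 1"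
  by (simp add: unitary_mat_def)

lemma unitary_mat_mul_adj: "unitary_mat U \<Longrightarrow> U ** adj U = mat 1"
  by (simp add: unitary_mat_def)

lemma unitary_mat_adj_mul_cancel: "unitary_mat U \<Longrightarrow> M ** adj U ** U = M"
  by (simp add: unitary_mat_def flip: matrix_mul_assoc)

lemma unitary_mat_mul_adj_cancel: "unitary_mat U \<Longrightarrow> M ** U ** adj U = M"
  by (simp add: unitary_mat_def flip: matrix_mul_assoc)

lemmas unitary_mat_cancel =
  unitary_mat_adj_mul unitary_mat_mul_adj unitary_mat_adj_mul_cancel unitary_mat_mul_adj_cancel

lemma unitary_mat_adj: "unitary_mat A \<Longrightarrow> unitary_mat (adj A)"
  by (simp add: unitary_mat_def)

lemma unitary_mat_mul:
  assumes "unitary_mat A" "unitary_mat B"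
  shows "unitary_mat (A ** B)"
  using assms unfolding unitary_mat_def[of "A ** B"]
  by (simp add: adj_matrix_mul matrix_mul_assoc unitary_mat_cancel)

lemma inj_unitary_mat_sandwich:
  assumes "unitary_mat A" "unitary_mat B"
  shows "inj (\<lambda>M. A ** M ** B)"
proof (rule injI)
  fix M N assume "A ** M ** B = A ** N ** B"
  then have "adj A ** (A ** M ** B) ** adj B = adj A ** (A ** N ** B) ** adj B" by simp
  with assms show "M = N"
    by (simp add: matrix_mul_assoc unitary_mat_cancel)
qed

lemma unitary_basis_unitary: "unitary_basis X U \<Longrightarrow> x \<in> X \<Longrightarrow> unitary_mat (U x)"
  by (simp add: unitary_basis_def)

lemma unitary_basis_inj_on:
  fixes U :: "'x \<Rightarrow> complex^'n^'n"
  assumes "unitary_basis X U"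
  shows "inj_on U X"
proof (rule inj_onI, rule ccontr)
  fix x y assume xy: "x \<in> X" "y \<in> X" "U x = U y" "x \<noteq> y"
  then have "trace (adj (U x) ** U x) = 0"
    using assms unfolding unitary_basis_def by metis
  moreover have "trace (adj (U x) ** U x) = of_nat CARD('n)"
    using assms xy(1) unfolding unitary_basis_def by simp
  ultimately show False by simp
qed

lemma ub_equivalent_iff_image:
  assumes "inj_on U X" "inj_on U' X"
  shows "ub_equivalent X U U' \<longleftrightarrow>
    (\<exists>V1 V2. unitary_mat V1 \<and> unitary_mat V2 \<and> U' ` X = (\<lambda>M. V1 ** M ** V2) ` U ` X)"
proof
  assume "ub_equivalent X U U'"
  then obtain V1 V2 \<sigma> where V: "unitary_mat V1" "unitary_mat V2" and "bij_betw \<sigma> X X"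
    and \<sigma>: "\<forall>x\<in>X. U' (\<sigma> x) = V1 ** U x ** V2"
    unfolding ub_equivalent_def by blast
  then have "U' ` X = U' ` \<sigma> ` X" by (simp add: bij_betw_def)
  also have "\<dots> = (\<lambda>M. V1 ** M ** V2) ` U ` X" using \<sigma> by (force simp: image_image)
  finally show "\<exists>V1 V2. unitary_mat V1 \<and> unitary_mat V2 \<and> U' ` X = (\<lambda>M. V1 ** M ** V2) ` U ` X"
    using V by blast
next
  assume "\<exists>V1 V2. unitary_mat V1 \<and> unitary_mat V2 \<and> U' ` X = (\<lambda>M. V1 ** M ** V2) ` U ` X"
  then obtain V1 V2 where V: "unitary_mat V1" "unitary_mat V2"
    and img: "U' ` X = (\<lambda>M. V1 ** M ** V2) ` U ` X" by blast
  define \<phi> where "\<phi> x = V1 ** U x ** V2" for x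
  have "bij_betw \<phi> X (U' ` X)"
    unfolding bij_betw_def \<phi>_def img image_image
    using inj_on_subset[OF inj_unitary_mat_sandwich[OF V] subset_UNIV] assms(1)
    by (auto intro: comp_inj_on[unfolded comp_def])
  moreover have "bij_betw (inv_into X U') (U' ` X) X"
    using assms(2) by (simp add: bij_betw_inv_into bij_betw_imageI)
  ultimately have "bij_betw (inv_into X U' \<circ> \<phi>) X X" by (rule bij_betw_trans)
  moreover have "U' ((inv_into X U' \<circ> \<phi>) x) = V1 ** U x ** V2" if "x \<in> X" for x
    using that by (simp add: f_inv_into_f img \<phi>_def)
  ultimately show "ub_equivalent X U U'"
    unfolding ub_equivalent_def using V by blast
qed

lemma tag_system_eq_image: "tag_system X U x0 = (\<lambda>x. adj (U x0) ** U x) ` (X - {x0})"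
  by (auto simp: tag_system_def)

lemma image_eq_insert_tag_system:
  assumes "unitary_mat (U x0)" "x0 \<in> X"
  shows "U ` X = insert (U x0) ((\<lambda>W. U x0 ** W) ` tag_system X U x0)"
  using assms by (auto simp: tag_system_eq_image image_image matrix_mul_assoc unitary_mat_cancel)

lemma tag_system_relabel:
  assumes "unitary_mat V1" "bij_betw \<sigma> X X" "x0 \<in> X"
    and \<sigma>: "\<forall>x\<in>X. U' (\<sigma> x) = V1 ** U x ** V2"
  shows "tag_system X U' (\<sigma> x0) = (\<lambda>A. adj V2 ** A ** V2) ` tag_system X U x0"
proof -
  have "\<sigma> ` (X - {x0}) = \<sigma> ` X - \<sigma> ` {x0}"
    using assms(2,3) by (intro inj_on_image_set_diff) (auto simp: bij_betw_def)
  then have "X - {\<sigma> x0} = \<sigma> ` (X - {x0})"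
    using assms(2) by (simp add: bij_betw_def)
  moreover have "adj (U' (\<sigma> x0)) ** U' (\<sigma> x) = adj V2 ** (adj (U x0) ** U x) ** V2"
    if "x \<in> X" for x
    using assms(1,3) that \<sigma>
    by (simp add: adj_matrix_mul matrix_mul_assoc unitary_mat_cancel)
  ultimately show ?thesis
    by (simp add: tag_system_eq_image image_image)
qed

lemma ub_equivalent_imp_CUE_tag_system:
  assumes "ub_equivalent X U U'" "x0 \<in> X"
  shows "\<exists>x0'\<in>X. CUE (tag_system X U x0) (tag_system X U' x0')"
proof -
  obtain V1 V2 \<sigma> where V: "unitary_mat V1" "unitary_mat V2" and \<sigma>: "bij_betw \<sigma> X X"
    and U': "\<forall>x\<in>X. U' (\<sigma> x) = V1 ** U x ** V2"
    using assms(1) unfolding ub_equivalent_def by blast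
  have "\<sigma> x0 \<in> X" using \<sigma> assms(2) by (auto dest: bij_betwE)
  moreover have "CUE (tag_system X U x0) (tag_system X U' (\<sigma> x0))"
    unfolding CUE_def using tag_system_relabel[OF V(1) \<sigma> assms(2) U'] V(2) by blast
  ultimately show ?thesis ..
qed

lemma CUE_tag_system_imp_ub_equivalent:
  assumes ub: "unitary_basis X U" and ub': "unitary_basis X U'"
    and x0: "x0 \<in> X" and x0': "x0' \<in> X"
    and "CUE (tag_system X U x0) (tag_system X U' x0')"
  shows "ub_equivalent X U U'"
proof -
  obtain V where V: "unitary_mat V"
    and tag: "tag_system X U' x0' = (\<lambda>A. adj V ** A ** V) ` tag_system X U x0"
    using assms(5) unfolding CUE_def by blast
  have u0: "unitary_mat (U x0)" and u0': "unitary_mat (U' x0')"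
    using ub ub' x0 x0' by (simp_all add: unitary_basis_unitary)
  define V1 where "V1 = U' x0' ** adj V ** adj (U x0)"
  have "unitary_mat V1"
    unfolding V1_def by (intro unitary_mat_mul unitary_mat_adj u0' V u0)
  moreover have "U' ` X = (\<lambda>M. V1 ** M ** V) ` U ` X"
  proof -
    have "V1 ** U x0 ** V = U' x0'"
      using u0 V by (simp add: V1_def matrix_mul_assoc unitary_mat_cancel)
    moreover have "V1 ** (U x0 ** W) ** V = U' x0' ** (adj V ** W ** V)" for W
      using u0 by (simp add: V1_def matrix_mul_assoc unitary_mat_cancel)
    ultimately show ?thesis
      using u0 u0' x0 x0'
      by (simp add: image_eq_insert_tag_system[of U'] image_eq_insert_tag_system[of U]
          tag image_image)
  qed
  ultimately show ?thesis
    using V by (auto simp: ub_equivalent_iff_image unitary_basis_inj_on ub ub')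
qed

theorem theorem2p7:
  fixes X :: "'x set" and U U' :: "'x \<Rightarrow> complex^'n^'n"
  assumes "2 \<le> CARD('n)"
    and "finite X" and "card X = CARD('n)^2"
    and "unitary_basis X U" and "unitary_basis X U'"
  shows "(ub_equivalent X U U' \<longleftrightarrow>
           (\<exists>x0\<in>X. \<exists>x0'\<in>X. CUE (tag_system X U x0) (tag_system X U' x0'))) \<and>
         ((\<exists>x0\<in>X. \<exists>x0'\<in>X. CUE (tag_system X U x0) (tag_system X U' x0')) \<longleftrightarrow>
           (\<forall>x0\<in>X. \<exists>x0'\<in>X. CUE (tag_system X U x0) (tag_system X U' x0')))"
proof -
  let ?some = "\<exists>x0\<in>X. \<exists>x0'\<in>X. CUE (tag_system X U x0) (tag_system X U' x0')"
  let ?each = "\<forall>x0\<in>X. \<exists>x0'\<in>X. CUE (tag_system X U x0) (tag_system X U' x0')"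
  have "card X \<noteq> 0" using assms(3) by simp
  then have "X \<noteq> {}" by auto
  then have each_some: "?each \<Longrightarrow> ?some" by blast
  have equiv_each: "ub_equivalent X U U' \<Longrightarrow> ?each"
    using ub_equivalent_imp_CUE_tag_system[of X U U'] by blast
  have some_equiv: "?some \<Longrightarrow> ub_equivalent X U U'"
    using CUE_tag_system_imp_ub_equivalent[OF assms(4,5)] by blast
  show ?thesis using each_some equiv_each some_equiv by argo
qed

end
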